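(* Let $L:\mathcal{A}\to \mathcal{B}$ and $R:\mathcal{B}\to \mathcal{A}$ be contravariant functors between abelian categories. (1) Assume that $(L,R)$ is a left adjoint pair, i.e. there are natural isomorphisms ${\rm Hom}_{\mathcal{B}}(L(A),B)\cong {\rm Hom}_{\mathcal{A}}(R(B),A)$, with associated natural transformations $\varepsilon:LR\to 1_{\mathcal{B}}$ and $\eta:RL\to 1_{\mathcal{A}}$. Let $M,N$ be objects of $\mathcal{B}$ with $M,N\in {\rm Refl}(R)$. Then the following are equivalent: (i) $N$ is strongly $M$-Rickart in $\mathcal{B}$; (ii) $R(M)$ is dual strongly $R(N)$-Rickart in $\mathcal{A}$ and for every morphism $f:M\to N$, ${\rm Ker}(f)$ is $M$-cyclic; (iii) $R(M)$ is dual strongly $R(N)$-Rickart in $\mathcal{A}$ and for every morphism $f:M\to N$, ${\rm Ker}(f)\in {\rm Refl}(R)$. (2) Assume that $(L,R)$ is a right adjoint pair, i.e. there are natural isomorphisms ${\rm Hom}_{\mathcal{A}}(A,R(B))\cong {\rm Hom}_{\mathcal{B}}(B,L(A))$, with associated natural transformations $\varepsilon:1_{\mathcal{B}}\to LR$ and $\eta:1_{\mathcal{A}}\to RL$. Let $M,N$ be objects of $\mathcal{A}$ with $M,N\in {\rm Refl}(L)$. Then the following are equivalent: (i) $N$ is dual strongly $M$-Rickart in $\mathcal{A}$; (ii) $L(M)$ is strongly $L(N)$-Rickart in $\mathcal{B}$ and for every morphism $f:M\to N$, ${\rm Coker}(f)$ is $N$-cocyclic; (iii) $L(M)$ is strongly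 $L(N)$-Rickart in $\mathcal{B}$ and for every morphism $f:M\to N$, ${\rm Coker}(f)\in {\rm Refl}(L)$.
   Context: ${\rm Refl}(R)$ is the class of objects $B$ of $\mathcal{B}$ for which $\varepsilon_B$ is an isomorphism ($R$-reflexive objects); ${\rm Refl}(L)$ is the class of objects $A$ of $\mathcal{A}$ for which $\eta_A$ is an isomorphism ($L$-reflexive objects). For objects $X,Y$, $Y$ is $X$-cyclic if there is an epimorphism $X\to Y$, and $X$ is $Y$-cocyclic if there is a monomorphism $X\to Y$. A morphism $f:X\to Y$ is a section if $f'f=1_X$ for some $f'$, a retraction if $ff'=1_Y$ for some $f'$. A monomorphism $k:K\to X$ is fully invariant if for every $h:X\to X$ there is $\alpha:K\to K$ with $hk=k\alpha$; an epimorphism $c:X\to C$ is fully coinvariant if for every $h:X\to X$ there is $\gamma:C\to C$ with $ch=\gamma c$. $N$ is strongly $M$-Rickart if the kernel of every morphism $f:M\to N$ is a fully invariant section; $N$ is dual strongly $M$-Rickart if the cokernel of every morphism $f:M\to N$ is a fully coinvariant retraction. *)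

theory Defs
  imports Main
begin

record ('o,'m) cat =
  Ob  :: "'o set"
  Ar  :: "'m set"
  Dom :: "'m \<Rightarrow> 'o"
  Cod :: "'m \<Rightarrow> 'o"
  Cp  :: "'m \<Rightarrow> 'm \<Rightarrow> 'm"   (* Cp C g f = g \<circ> f *)
  Id  :: "'o \<Rightarrow> 'm"

definition hom :: "('o,'m) cat \<Rightarrow> 'o \<Rightarrow> 'o \<Rightarrow> 'm set" where
  "hom C A B = {f \<in> Ar C. Dom C f = A \<and> Cod C f = B}"

definition is_category :: "('o,'m) cat \<Rightarrow> bool" where
  "is_category C \<longleftrightarrow>
     (\<forall>f\<in>Ar C. Dom C f \<in> Ob C \<and> Cod C f \<in> Ob C) \<and>
     (\<forall>A\<in>Ob C. Id C A \<in> hom C A A) \<and>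
     (\<forall>f\<in>Ar C. \<forall>g\<in>Ar C. Cod C f = Dom C g \<longrightarrow> Cp C g f \<in> hom C (Dom C f) (Cod C g)) \<and>
     (\<forall>f\<in>Ar C. Cp C f (Id C (Dom C f)) = f \<and> Cp C (Id C (Cod C f)) f = f) \<and>
     (\<forall>f\<in>Ar C. \<forall>g\<in>Ar C. \<forall>h\<in>Ar C. Cod C f = Dom C g \<longrightarrow> Cod C g = Dom C h \<longrightarrow>
         Cp C h (Cp C g f) = Cp C (Cp C h g) f)"

definition mono :: "('o,'m) cat \<Rightarrow> 'm \<Rightarrow> bool" where
  "mono C f \<longleftrightarrow> f \<in> Ar C \<and>
     (\<forall>g\<in>Ar C. \<forall>h\<in>Ar C. Cod C g = Dom C f \<longrightarrow> Cod C h = Dom C f \<longrightarrow> Dom C g = Dom C h \<longrightarrow>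
        Cp C f g = Cp C f h \<longrightarrow> g = h)"

definition epi :: "('o,'m) cat \<Rightarrow> 'm \<Rightarrow> bool" where
  "epi C f \<longleftrightarrow> f \<in> Ar C \<and>
     (\<forall>g\<in>Ar C. \<forall>h\<in>Ar C. Dom C g = Cod C f \<longrightarrow> Dom C h = Cod C f \<longrightarrow> Cod C g = Cod C h \<longrightarrow>
        Cp C g f = Cp C h f \<longrightarrow> g = h)"

definition iso :: "('o,'m) cat \<Rightarrow> 'm \<Rightarrow> bool" where
  "iso C f \<longleftrightarrow> f \<in> Ar C \<and> (\<exists>g\<in>hom C (Cod C f) (Dom C f).
      Cp C g f = Id C (Dom C f) \<and> Cp C f g = Id C (Cod C f))"

definition "section" :: "('o,'m) cat \<Rightarrow> 'm \<Rightarrow> bool" where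
  "section C f \<longleftrightarrow> f \<in> Ar C \<and> (\<exists>f'\<in>hom C (Cod C f) (Dom C f). Cp C f' f = Id C (Dom C f))"

definition retraction :: "('o,'m) cat \<Rightarrow> 'm \<Rightarrow> bool" where
  "retraction C f \<longleftrightarrow> f \<in> Ar C \<and> (\<exists>f'\<in>hom C (Cod C f) (Dom C f). Cp C f f' = Id C (Cod C f))"

definition zero_obj :: "('o,'m) cat \<Rightarrow> 'o \<Rightarrow> bool" where
  "zero_obj C Z \<longleftrightarrow> Z \<in> Ob C \<and>
     (\<forall>A\<in>Ob C. (\<exists>!f. f \<in> hom C Z A) \<and> (\<exists>!f. f \<in> hom C A Z))"

definition zero_arr :: "('o,'m) cat \<Rightarrow> 'm \<Rightarrow> bool" where
  "zero_arr C f \<longleftrightarrow> f \<in> Ar C \<and> (\<exists>Z. zero_obj C Z \<and>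
     (\<exists>g\<in>hom C (Dom C f) Z. \<exists>h\<in>hom C Z (Cod C f). f = Cp C h g))"

definition is_kernel :: "('o,'m) cat \<Rightarrow> 'm \<Rightarrow> 'm \<Rightarrow> bool" where
  "is_kernel C f k \<longleftrightarrow> f \<in> Ar C \<and> k \<in> Ar C \<and> Cod C k = Dom C f \<and> zero_arr C (Cp C f k) \<and>
     (\<forall>g\<in>Ar C. Cod C g = Dom C f \<longrightarrow> zero_arr C (Cp C f g) \<longrightarrow>
        (\<exists>!u. u \<in> hom C (Dom C g) (Dom C k) \<and> Cp C k u = g))"

definition is_cokernel :: "('o,'m) cat \<Rightarrow> 'm \<Rightarrow> 'm \<Rightarrow> bool" where
  "is_cokernel C f c \<longleftrightarrow> f \<in> Ar C \<and> c \<in> Ar C \<and> Dom C c = Cod C f \<and> zero_arr C (Cp C c f) \<and>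
     (\<forall>g\<in>Ar C. Dom C g = Cod C f \<longrightarrow> zero_arr C (Cp C g f) \<longrightarrow>
        (\<exists>!u. u \<in> hom C (Cod C c) (Cod C g) \<and> Cp C u c = g))"

definition has_product :: "('o,'m) cat \<Rightarrow> 'o \<Rightarrow> 'o \<Rightarrow> bool" where
  "has_product C A B \<longleftrightarrow> (\<exists>P\<in>Ob C. \<exists>p1\<in>hom C P A. \<exists>p2\<in>hom C P B.
     \<forall>X\<in>Ob C. \<forall>f\<in>hom C X A. \<forall>g\<in>hom C X B.
        \<exists>!u. u \<in> hom C X P \<and> Cp C p1 u = f \<and> Cp C p2 u = g)"

definition has_coproduct :: "('o,'m) cat \<Rightarrow> 'o \<Rightarrow> 'o \<Rightarrow> bool" where
  "has_coproduct C A B \<longleftrightarrow> (\<exists>S\<in>Ob C. \<exists>i1\<in>hom C A S. \<exists>i2\<in>hom C B S.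
     \<forall>X\<in>Ob C. \<forall>f\<in>hom C A X. \<forall>g\<in>hom C B X.
        \<exists>!u. u \<in> hom C S X \<and> Cp C u i1 = f \<and> Cp C u i2 = g)"

text \<open>Abelian category (Mac Lane, CWM VIII.3): zero object, binary products and
  coproducts, kernels and cokernels, every mono is a kernel, every epi is a cokernel.\<close>
definition abelian :: "('o,'m) cat \<Rightarrow> bool" where
  "abelian C \<longleftrightarrow> is_category C \<and> (\<exists>Z. zero_obj C Z) \<and>
     (\<forall>A\<in>Ob C. \<forall>B\<in>Ob C. has_product C A B \<and> has_coproduct C A B) \<and>
     (\<forall>f\<in>Ar C. (\<exists>k. is_kernel C f k) \<and> (\<exists>c. is_cokernel C f c)) \<and>
     (\<forall>m. mono C m \<longrightarrow> (\<exists>f. is_kernel C f m)) \<and>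
     (\<forall>e. epi C e \<longrightarrow> (\<exists>f. is_cokernel C f e))"

definition contra_functor ::
  "('a,'f) cat \<Rightarrow> ('b,'g) cat \<Rightarrow> ('a \<Rightarrow> 'b) \<Rightarrow> ('f \<Rightarrow> 'g) \<Rightarrow> bool" where
  "contra_functor C D Fo Fm \<longleftrightarrow>
     (\<forall>A\<in>Ob C. Fo A \<in> Ob D) \<and>
     (\<forall>f\<in>Ar C. Fm f \<in> hom D (Fo (Cod C f)) (Fo (Dom C f))) \<and>
     (\<forall>A\<in>Ob C. Fm (Id C A) = Id D (Fo A)) \<and>
     (\<forall>f\<in>Ar C. \<forall>g\<in>Ar C. Cod C f = Dom C g \<longrightarrow> Fm (Cp C g f) = Cp D (Fm f) (Fm g))"

definition left_adjoint_pair ::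
  "('a,'f) cat \<Rightarrow> ('b,'g) cat \<Rightarrow> ('a \<Rightarrow> 'b) \<Rightarrow> ('f \<Rightarrow> 'g) \<Rightarrow> ('b \<Rightarrow> 'a) \<Rightarrow> ('g \<Rightarrow> 'f)
   \<Rightarrow> ('a \<Rightarrow> 'b \<Rightarrow> 'g \<Rightarrow> 'f) \<Rightarrow> bool" where
  "left_adjoint_pair CA CB Lo Lm Ro Rm phi \<longleftrightarrow>
     (\<forall>A\<in>Ob CA. \<forall>B\<in>Ob CB. bij_betw (phi A B) (hom CB (Lo A) B) (hom CA (Ro B) A)) \<and>
     (\<forall>A\<in>Ob CA. \<forall>A'\<in>Ob CA. \<forall>B\<in>Ob CB. \<forall>B'\<in>Ob CB.
        \<forall>a\<in>hom CA A A'. \<forall>b\<in>hom CB B B'. \<forall>g\<in>hom CB (Lo A) B.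
          phi A' B' (Cp CB b (Cp CB g (Lm a))) = Cp CA a (Cp CA (phi A B g) (Rm b)))"

definition left_eps :: "('a,'f) cat \<Rightarrow> ('b,'g) cat \<Rightarrow> ('a \<Rightarrow> 'b) \<Rightarrow> ('b \<Rightarrow> 'a)
   \<Rightarrow> ('a \<Rightarrow> 'b \<Rightarrow> 'g \<Rightarrow> 'f) \<Rightarrow> 'b \<Rightarrow> 'g" where
  "left_eps CA CB Lo Ro phi B = inv_into (hom CB (Lo (Ro B)) B) (phi (Ro B) B) (Id CA (Ro B))"

definition left_eta :: "('b,'g) cat \<Rightarrow> ('a \<Rightarrow> 'b) \<Rightarrow> ('a \<Rightarrow> 'b \<Rightarrow> 'g \<Rightarrow> 'f) \<Rightarrow> 'a \<Rightarrow> 'f" where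
  "left_eta CB Lo phi A = phi A (Lo A) (Id CB (Lo A))"

definition right_adjoint_pair ::
  "('a,'f) cat \<Rightarrow> ('b,'g) cat \<Rightarrow> ('a \<Rightarrow> 'b) \<Rightarrow> ('f \<Rightarrow> 'g) \<Rightarrow> ('b \<Rightarrow> 'a) \<Rightarrow> ('g \<Rightarrow> 'f)
   \<Rightarrow> ('a \<Rightarrow> 'b \<Rightarrow> 'f \<Rightarrow> 'g) \<Rightarrow> bool" where
  "right_adjoint_pair CA CB Lo Lm Ro Rm psi \<longleftrightarrow>
     (\<forall>A\<in>Ob CA. \<forall>B\<in>Ob CB. bij_betw (psi A B) (hom CA A (Ro B)) (hom CB B (Lo A))) \<and>
     (\<forall>A\<in>Ob CA. \<forall>A'\<in>Ob CA. \<forall>B\<in>Ob CB. \<forall>B'\<in>Ob CB.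
        \<forall>a\<in>hom CA A' A. \<forall>b\<in>hom CB B' B. \<forall>g\<in>hom CA A (Ro B).
          psi A' B' (Cp CA (Rm b) (Cp CA g a)) = Cp CB (Lm a) (Cp CB (psi A B g) b))"

definition right_eps :: "('a,'f) cat \<Rightarrow> ('b \<Rightarrow> 'a) \<Rightarrow> ('a \<Rightarrow> 'b \<Rightarrow> 'f \<Rightarrow> 'g) \<Rightarrow> 'b \<Rightarrow> 'g" where
  "right_eps CA Ro psi B = psi (Ro B) B (Id CA (Ro B))"

definition right_eta :: "('a,'f) cat \<Rightarrow> ('b,'g) cat \<Rightarrow> ('a \<Rightarrow> 'b) \<Rightarrow> ('b \<Rightarrow> 'a)
   \<Rightarrow> ('a \<Rightarrow> 'b \<Rightarrow> 'f \<Rightarrow> 'g) \<Rightarrow> 'a \<Rightarrow> 'f" where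
  "right_eta CA CB Lo Ro psi A = inv_into (hom CA A (Ro (Lo A))) (psi A (Lo A)) (Id CB (Lo A))"

definition fully_invariant :: "('o,'m) cat \<Rightarrow> 'm \<Rightarrow> bool" where
  "fully_invariant C k \<longleftrightarrow> mono C k \<and>
     (\<forall>h\<in>hom C (Cod C k) (Cod C k). \<exists>\<alpha>\<in>hom C (Dom C k) (Dom C k). Cp C h k = Cp C k \<alpha>)"

definition fully_coinvariant :: "('o,'m) cat \<Rightarrow> 'm \<Rightarrow> bool" where
  "fully_coinvariant C c \<longleftrightarrow> epi C c \<and>
     (\<forall>h\<in>hom C (Dom C c) (Dom C c). \<exists>\<gamma>\<in>hom C (Cod C c) (Cod C c). Cp C c h = Cp C \<gamma> c)"

text \<open>strongly_rickart C M N : N is strongly M-Rickart.\<close>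
definition strongly_rickart :: "('o,'m) cat \<Rightarrow> 'o \<Rightarrow> 'o \<Rightarrow> bool" where
  "strongly_rickart C M N \<longleftrightarrow>
     (\<forall>f\<in>hom C M N. \<forall>k. is_kernel C f k \<longrightarrow> fully_invariant C k \<and> section C k)"

text \<open>dual_strongly_rickart C M N : N is dual strongly M-Rickart.\<close>
definition dual_strongly_rickart :: "('o,'m) cat \<Rightarrow> 'o \<Rightarrow> 'o \<Rightarrow> bool" where
  "dual_strongly_rickart C M N \<longleftrightarrow>
     (\<forall>f\<in>hom C M N. \<forall>c. is_cokernel C f c \<longrightarrow> fully_coinvariant C c \<and> retraction C c)"

text \<open>cyclic C X Y : Y is X-cyclic.  cocyclic C X Y : X is Y-cocyclic.\<close>
definition cyclic :: "('o,'m) cat \<Rightarrow> 'o \<Rightarrow> 'o \<Rightarrow> bool" where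
  "cyclic C X Y \<longleftrightarrow> (\<exists>e\<in>hom C X Y. epi C e)"

definition cocyclic :: "('o,'m) cat \<Rightarrow> 'o \<Rightarrow> 'o \<Rightarrow> bool" where
  "cocyclic C X Y \<longleftrightarrow> (\<exists>m\<in>hom C X Y. mono C m)"

end

theory Submission
  imports Defs
begin

text \<open>For a left adjoint pair, \<open>R(g) = \<phi>(g \<circ> \<epsilon>\<^sub>M)\<close> for every \<open>g : M \<rightarrow> N\<close>; so if \<open>M\<close> is
  \<open>R\<close>-reflexive, \<open>R\<close> maps \<open>Hom(M, N)\<close> bijectively onto \<open>Hom(R N, R M)\<close> and reflects zero
  morphisms. Moreover \<open>R\<close> turns a kernel \<open>k : K \<rightarrow> M\<close> of \<open>f\<close> into a cokernel of \<open>R(f)\<close>.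
  Sections of \<open>k\<close> and retractions of \<open>R(k)\<close>, and full invariance of \<open>k\<close> and full
  coinvariance of \<open>R(k)\<close>, then correspond, provided \<open>\<epsilon>\<^sub>K\<close> is an epimorphism, resp. an
  isomorphism. Each side condition in (ii) and (iii) makes \<open>\<epsilon>\<^sub>K\<close> epi, and a strongly Rickart
  \<open>N\<close> makes \<open>K\<close> a retract of \<open>M\<close>, hence \<open>M\<close>-cyclic and \<open>R\<close>-reflexive. Part (2) is part (1)
  in the opposite categories.\<close>

lemma bij_betw_ex1: "bij_betw f X Y \<Longrightarrow> \<exists>!y. y \<in> Y \<Longrightarrow> \<exists>!x. x \<in> X"
  unfolding bij_betw_def inj_on_def by blast

section \<open>Elementary category theory\<close>

lemma cat_hom_Ob:
  assumes "is_category C" "f \<in> hom C A B" shows "A \<in> Ob C" "B \<in> Ob C"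
  using assms unfolding is_category_def hom_def by auto

lemma cat_comp_hom:
  assumes "is_category C" "f \<in> hom C A B" "g \<in> hom C B D"
  shows "Cp C g f \<in> hom C A D"
  using assms unfolding is_category_def hom_def by auto

lemma cat_id_hom:
  assumes "is_category C" "A \<in> Ob C" shows "Id C A \<in> hom C A A"
  using assms unfolding is_category_def by auto

lemma cat_id_right:
  assumes "is_category C" "f \<in> hom C A B" shows "Cp C f (Id C A) = f"
  using assms unfolding is_category_def hom_def by auto

lemma cat_id_left:
  assumes "is_category C" "f \<in> hom C A B" shows "Cp C (Id C B) f = f"
  using assms unfolding is_category_def hom_def by auto

lemma cat_assoc:
  assumes "is_category C" "f \<in> hom C A B" "g \<in> hom C B D" "h \<in> hom C D E"
  shows "Cp C h (Cp C g f) = Cp C (Cp C h g) f"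
  using assms unfolding is_category_def hom_def by auto

lemma iso_invE:
  assumes "iso C f" "f \<in> hom C A B"
  obtains g where "g \<in> hom C B A" "Cp C g f = Id C A" "Cp C f g = Id C B"
  using assms unfolding iso_def hom_def by auto

lemma isoI:
  assumes "f \<in> hom C A B" "g \<in> hom C B A" "Cp C g f = Id C A" "Cp C f g = Id C B"
  shows "iso C f"
  using assms unfolding iso_def hom_def by auto

lemma mono_cancel:
  assumes "mono C m" "m \<in> hom C B D" "x \<in> hom C A B" "y \<in> hom C A B" "Cp C m x = Cp C m y"
  shows "x = y"
  using assms unfolding mono_def hom_def by auto

lemma epi_cancel:
  assumes "epi C e" "e \<in> hom C A B" "x \<in> hom C B D" "y \<in> hom C B D" "Cp C x e = Cp C y e"
  shows "x = y"
  using assms unfolding epi_def hom_def by auto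

lemma split_epi:
  assumes C: "is_category C" and u: "u \<in> hom C M K" and k: "k \<in> hom C K M"
    and uk: "Cp C u k = Id C K"
  shows "epi C u"
  unfolding epi_def
proof (intro conjI ballI impI)
  show "u \<in> Ar C" using u by (simp add: hom_def)
next
  fix g h assume g: "g \<in> Ar C" "Dom C g = Cod C u" and h: "h \<in> Ar C" "Dom C h = Cod C u"
    and cod: "Cod C g = Cod C h" and eq: "Cp C g u = Cp C h u"
  have gh: "g \<in> hom C K (Cod C g)" and hh: "h \<in> hom C K (Cod C g)"
    using g h u cod by (auto simp: hom_def)
  have "g = Cp C (Cp C g u) k" using uk cat_id_right[OF C gh] cat_assoc[OF C k u gh] by simp
  also have "\<dots> = h" using eq uk cat_id_right[OF C hh] cat_assoc[OF C k u hh] by simp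
  finally show "g = h" .
qed

lemma iso_epi:
  assumes C: "is_category C" and i: "iso C f" shows "epi C f"
proof -
  have f: "f \<in> hom C (Dom C f) (Cod C f)" using i by (simp add: iso_def hom_def)
  obtain g where "g \<in> hom C (Cod C f) (Dom C f)" "Cp C f g = Id C (Cod C f)"
    using iso_invE[OF i f] by blast
  then show ?thesis using split_epi[OF C f] by blast
qed

lemma epi_comp:
  assumes C: "is_category C" and f: "f \<in> hom C A B" and g: "g \<in> hom C B D"
    and "epi C f" "epi C g"
  shows "epi C (Cp C g f)"
  unfolding epi_def
proof (intro conjI ballI impI)
  show "Cp C g f \<in> Ar C" using cat_comp_hom[OF C f g] by (simp add: hom_def)
next
  fix x y assume x: "x \<in> Ar C" "Dom C x = Cod C (Cp C g f)" and y: "y \<in> Ar C" "Dom C y = Cod C (Cp C g f)"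
    and cod: "Cod C x = Cod C y" and eq: "Cp C x (Cp C g f) = Cp C y (Cp C g f)"
  have xh: "x \<in> hom C D (Cod C x)" and yh: "y \<in> hom C D (Cod C x)"
    using x y cod cat_comp_hom[OF C f g] by (auto simp: hom_def)
  have "Cp C (Cp C x g) f = Cp C (Cp C y g) f"
    using eq cat_assoc[OF C f g xh] cat_assoc[OF C f g yh] by simp
  then have "Cp C x g = Cp C y g"
    using \<open>epi C f\<close> cat_comp_hom[OF C g xh] cat_comp_hom[OF C g yh] f
    unfolding epi_def hom_def by auto
  then show "x = y" using \<open>epi C g\<close> xh yh g unfolding epi_def hom_def by auto
qed

lemma epi_comp_left_factor:
  assumes C: "is_category C" and f: "f \<in> hom C A B" and g: "g \<in> hom C B D"
    and "epi C (Cp C g f)"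
  shows "epi C g"
  unfolding epi_def
proof (intro conjI ballI impI)
  show "g \<in> Ar C" using g by (simp add: hom_def)
next
  fix x y assume x: "x \<in> Ar C" "Dom C x = Cod C g" and y: "y \<in> Ar C" "Dom C y = Cod C g"
    and cod: "Cod C x = Cod C y" and eq: "Cp C x g = Cp C y g"
  have xh: "x \<in> hom C D (Cod C x)" and yh: "y \<in> hom C D (Cod C x)"
    using x y cod g by (auto simp: hom_def)
  have "Cp C x (Cp C g f) = Cp C y (Cp C g f)"
    using eq cat_assoc[OF C f g xh] cat_assoc[OF C f g yh] by simp
  then show "x = y"
    using \<open>epi C (Cp C g f)\<close> xh yh cat_comp_hom[OF C f g] unfolding epi_def hom_def by auto
qed

lemma zero_arr_comp_left:
  assumes C: "is_category C" and z: "zero_arr C f" and g: "g \<in> hom C (Cod C f) X"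
  shows "zero_arr C (Cp C g f)"
proof -
  from z obtain Z a b where Z: "zero_obj C Z" and a: "a \<in> hom C (Dom C f) Z"
    and b: "b \<in> hom C Z (Cod C f)" and f: "f = Cp C b a" unfolding zero_arr_def by blast
  have gf: "Cp C g f \<in> hom C (Dom C f) X"
    using z g cat_comp_hom[OF C _ g] by (simp add: zero_arr_def hom_def)
  have "Cp C g f = Cp C (Cp C g b) a" using cat_assoc[OF C a b g] f by simp
  then show ?thesis
    unfolding zero_arr_def using Z a cat_comp_hom[OF C b g] gf by (auto simp: hom_def)
qed

lemma zero_arr_comp_right:
  assumes C: "is_category C" and z: "zero_arr C f" and g: "g \<in> hom C X (Dom C f)"
  shows "zero_arr C (Cp C f g)"
proof -
  from z obtain Z a b where Z: "zero_obj C Z" and a: "a \<in> hom C (Dom C f) Z"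
    and b: "b \<in> hom C Z (Cod C f)" and f: "f = Cp C b a" unfolding zero_arr_def by blast
  have fg: "Cp C f g \<in> hom C X (Cod C f)"
    using z g cat_comp_hom[OF C g] by (simp add: zero_arr_def hom_def)
  have "Cp C f g = Cp C b (Cp C a g)" using cat_assoc[OF C g a b] f by simp
  then show ?thesis
    unfolding zero_arr_def using Z b cat_comp_hom[OF C g a] fg by (auto simp: hom_def)
qed

lemma zero_arr_through:
  assumes C: "is_category C" and Z: "zero_obj C Z" and a: "a \<in> hom C X Z" and b: "b \<in> hom C Z Y"
  shows "zero_arr C (Cp C b a)"
  using cat_comp_hom[OF C a b] Z a b unfolding zero_arr_def hom_def by auto

lemma zero_obj_if_initial:
  assumes C: "is_category C" and Z: "zero_obj C Z" and I: "I \<in> Ob C"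
    and initial: "\<forall>A\<in>Ob C. \<exists>!f. f \<in> hom C I A"
  shows "zero_obj C I"
proof -
  obtain j where j: "j \<in> hom C I Z" using Z I unfolding zero_obj_def by blast
  obtain i where i: "i \<in> hom C Z I" using Z I unfolding zero_obj_def by blast
  have ij: "Cp C i j = Id C I"
    using initial I cat_comp_hom[OF C j i] cat_id_hom[OF C I] by blast
  have "\<exists>!f. f \<in> hom C A I" if A: "A \<in> Ob C" for A
  proof -
    obtain x where x: "x \<in> hom C A Z" using Z A unfolding zero_obj_def by blast
    have "y = Cp C i x" if y: "y \<in> hom C A I" for y
    proof -
      have "Cp C j y = x" using Z A cat_comp_hom[OF C y j] x unfolding zero_obj_def by blast
      then show ?thesis using cat_assoc[OF C y j i] ij cat_id_left[OF C y] by simp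
    qed
    then show ?thesis using cat_comp_hom[OF C x i] by blast
  qed
  then show ?thesis using initial I unfolding zero_obj_def by blast
qed

lemma kernel_factor:
  assumes "is_kernel C f k" "g \<in> hom C X (Dom C f)" "zero_arr C (Cp C f g)"
  shows "\<exists>!u. u \<in> hom C X (Dom C k) \<and> Cp C k u = g"
proof -
  have "g \<in> Ar C" "Cod C g = Dom C f" "Dom C g = X" using assms(2) by (auto simp: hom_def)
  then show ?thesis using assms(1,3) unfolding is_kernel_def by blast
qed

lemma cokernel_factor:
  assumes "is_cokernel C f c" "g \<in> hom C (Cod C f) X" "zero_arr C (Cp C g f)"
  shows "\<exists>!u. u \<in> hom C (Cod C c) X \<and> Cp C u c = g"
proof -
  have "g \<in> Ar C" "Dom C g = Cod C f" "Cod C g = X" using assms(2) by (auto simp: hom_def)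
  then show ?thesis using assms(1,3) unfolding is_cokernel_def by blast
qed

lemma kernel_hom: "is_kernel C f k \<Longrightarrow> f \<in> hom C M N \<Longrightarrow> k \<in> hom C (Dom C k) M"
  by (simp add: is_kernel_def hom_def)

lemma cokernel_zero: "is_cokernel C f c \<Longrightarrow> zero_arr C (Cp C c f)"
  by (simp add: is_cokernel_def)

lemma kernel_mono:
  assumes C: "is_category C" and k: "is_kernel C f k" shows "mono C k"
  unfolding mono_def
proof (intro conjI ballI impI)
  show "k \<in> Ar C" using k by (simp add: is_kernel_def)
next
  fix g h assume g: "g \<in> Ar C" and h: "h \<in> Ar C" and gc: "Cod C g = Dom C k"
    and hc: "Cod C h = Dom C k" and dd: "Dom C g = Dom C h" and eq: "Cp C k g = Cp C k h"
  have kh: "k \<in> hom C (Dom C k) (Dom C f)" and fh: "f \<in> hom C (Dom C f) (Cod C f)"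
    using k by (auto simp: is_kernel_def hom_def)
  have gh: "g \<in> hom C (Dom C g) (Dom C k)" using g gc by (simp add: hom_def)
  have fk: "zero_arr C (Cp C f k)" using k by (simp add: is_kernel_def)
  have "Dom C (Cp C f k) = Dom C k" using cat_comp_hom[OF C kh fh] by (simp add: hom_def)
  then have "zero_arr C (Cp C (Cp C f k) g)" using zero_arr_comp_right[OF C fk] gh by simp
  then have "zero_arr C (Cp C f (Cp C k g))" using cat_assoc[OF C gh kh fh] by simp
  then have "\<exists>!u. u \<in> hom C (Dom C g) (Dom C k) \<and> Cp C k u = Cp C k g"
    using kernel_factor[OF k cat_comp_hom[OF C gh kh]] by simp
  then show "g = h" using gh hc h dd eq by (auto simp: hom_def)
qed

lemma cokernel_epi:
  assumes C: "is_category C" and c: "is_cokernel C f c" shows "epi C c"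
  unfolding epi_def
proof (intro conjI ballI impI)
  show "c \<in> Ar C" using c by (simp add: is_cokernel_def)
next
  fix g h assume g: "g \<in> Ar C" and h: "h \<in> Ar C" and gc: "Dom C g = Cod C c"
    and hc: "Dom C h = Cod C c" and dd: "Cod C g = Cod C h" and eq: "Cp C g c = Cp C h c"
  have ch: "c \<in> hom C (Cod C f) (Cod C c)" and fh: "f \<in> hom C (Dom C f) (Cod C f)"
    using c by (auto simp: is_cokernel_def hom_def)
  have gh: "g \<in> hom C (Cod C c) (Cod C g)" using g gc by (simp add: hom_def)
  have cf: "zero_arr C (Cp C c f)" using c by (simp add: is_cokernel_def)
  have "Cod C (Cp C c f) = Cod C c" using cat_comp_hom[OF C fh ch] by (simp add: hom_def)
  then have "zero_arr C (Cp C g (Cp C c f))" using zero_arr_comp_left[OF C cf] gh by simp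
  then have "zero_arr C (Cp C (Cp C g c) f)" using cat_assoc[OF C fh ch gh] by simp
  then have "\<exists>!u. u \<in> hom C (Cod C c) (Cod C g) \<and> Cp C u c = Cp C g c"
    using cokernel_factor[OF c cat_comp_hom[OF C ch gh]] by simp
  then show "g = h" using gh hc h dd eq by (auto simp: hom_def)
qed

lemma cokernel_unique:
  assumes C: "is_category C" and c: "is_cokernel C g c" and c': "is_cokernel C g c'"
  obtains t t' where "t \<in> hom C (Cod C c) (Cod C c')" "t' \<in> hom C (Cod C c') (Cod C c)"
    "Cp C t c = c'" "Cp C t' c' = c" "Cp C t t' = Id C (Cod C c')" "Cp C t' t = Id C (Cod C c)"
proof -
  have factor: "\<exists>!u. u \<in> hom C (Cod C d) (Cod C d') \<and> Cp C u d = d'"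
    if d: "is_cokernel C g d" and d': "is_cokernel C g d'" for d d'
    using cokernel_factor[OF d] d' by (simp add: is_cokernel_def hom_def)
  obtain t where t: "t \<in> hom C (Cod C c) (Cod C c')" "Cp C t c = c'" using factor[OF c c'] by blast
  obtain t' where t': "t' \<in> hom C (Cod C c') (Cod C c)" "Cp C t' c' = c" using factor[OF c' c] by blast
  have round_trip: "Cp C s r = Id C (Cod C d)"
    if d: "is_cokernel C g d" and d': "is_cokernel C g d'"
      and r: "r \<in> hom C (Cod C d) (Cod C d')" "Cp C r d = d'"
      and s: "s \<in> hom C (Cod C d') (Cod C d)" "Cp C s d' = d" for d d' r s
  proof -
    have dh: "d \<in> hom C (Cod C g) (Cod C d)" using d by (simp add: is_cokernel_def hom_def)
    have "Cp C (Cp C s r) d = d" using cat_assoc[OF C dh r(1) s(1)] r s by simp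
    moreover have "Cp C (Id C (Cod C d)) d = d" using cat_id_left[OF C dh] .
    ultimately show ?thesis
      using factor[OF d d] cat_comp_hom[OF C r(1) s(1)] cat_id_hom[OF C cat_hom_Ob(2)[OF C dh]]
      by blast
  qed
  show thesis using that t t' round_trip[OF c c' t t'] round_trip[OF c' c t' t] by blast
qed

lemma cokernel_fully_coinvariant_retraction:
  assumes C: "is_category C" and c: "is_cokernel C g c" and c': "is_cokernel C g c'"
    and fc: "fully_coinvariant C c" and rc: "retraction C c"
  shows "fully_coinvariant C c' \<and> retraction C c'"
proof -
  obtain t t' where t: "t \<in> hom C (Cod C c) (Cod C c')" "t' \<in> hom C (Cod C c') (Cod C c)"
    "Cp C t c = c'" "Cp C t' c' = c" "Cp C t t' = Id C (Cod C c')"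
    using cokernel_unique[OF C c c'] by blast
  have ch: "c \<in> hom C (Cod C g) (Cod C c)" and ch': "c' \<in> hom C (Cod C g) (Cod C c')"
    using c c' by (auto simp: is_cokernel_def hom_def)
  obtain s where s: "s \<in> hom C (Cod C c) (Cod C g)" "Cp C c s = Id C (Cod C c)"
    using rc ch unfolding retraction_def hom_def by auto
  have st': "Cp C s t' \<in> hom C (Cod C c') (Cod C g)" using cat_comp_hom[OF C t(2) s(1)] .
  have "Cp C c' (Cp C s t') = Cp C t (Cp C c (Cp C s t'))"
    using t(3) cat_assoc[OF C st' ch t(1)] by simp
  also have "\<dots> = Cp C t (Cp C (Cp C c s) t')" using cat_assoc[OF C t(2) s(1) ch] by simp
  also have "\<dots> = Id C (Cod C c')" using s(2) cat_id_left[OF C t(2)] t(5) by simp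
  finally have "retraction C c'"
    using st' ch' unfolding retraction_def hom_def by auto
  moreover have "fully_coinvariant C c'"
    unfolding fully_coinvariant_def
  proof (intro conjI ballI)
    show "epi C c'" using cokernel_epi[OF C c'] .
    fix h assume "h \<in> hom C (Dom C c') (Dom C c')"
    then have h: "h \<in> hom C (Cod C g) (Cod C g)" using ch' by (simp add: hom_def)
    obtain \<gamma> where \<gamma>: "\<gamma> \<in> hom C (Cod C c) (Cod C c)" "Cp C c h = Cp C \<gamma> c"
      using fc h ch unfolding fully_coinvariant_def hom_def by auto
    have "Cp C c' h = Cp C t (Cp C \<gamma> (Cp C t' c'))"
      using t(3,4) \<gamma>(2) cat_assoc[OF C h ch t(1)] by simp
    also have "\<dots> = Cp C (Cp C t (Cp C \<gamma> t')) c'"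
      using cat_assoc[OF C ch' t(2) \<gamma>(1)] cat_assoc[OF C ch' cat_comp_hom[OF C t(2) \<gamma>(1)] t(1)]
      by simp
    finally show "\<exists>\<gamma>'\<in>hom C (Cod C c') (Cod C c'). Cp C c' h = Cp C \<gamma>' c'"
      using cat_comp_hom[OF C cat_comp_hom[OF C t(2) \<gamma>(1)] t(1)] by blast
  qed
  ultimately show ?thesis by blast
qed

lemma strongly_rickart_kernel_retract:
  assumes "strongly_rickart C M N" "f \<in> hom C M N" "is_kernel C f k"
  obtains u where "u \<in> hom C M (Dom C k)" "Cp C u k = Id C (Dom C k)"
proof -
  have "section C k" using assms unfolding strongly_rickart_def by blast
  moreover have "Cod C k = M" using kernel_hom[OF assms(3,2)] by (simp add: hom_def)
  ultimately show thesis using that unfolding section_def by blast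
qed

lemma contra_functor_Ob:
  assumes "contra_functor C D Fo Fm" "A \<in> Ob C" shows "Fo A \<in> Ob D"
  using assms unfolding contra_functor_def by auto

lemma contra_functor_hom:
  assumes "contra_functor C D Fo Fm" "f \<in> hom C A B" shows "Fm f \<in> hom D (Fo B) (Fo A)"
  using assms unfolding contra_functor_def hom_def by auto

lemma contra_functor_id:
  assumes "contra_functor C D Fo Fm" "A \<in> Ob C" shows "Fm (Id C A) = Id D (Fo A)"
  using assms unfolding contra_functor_def by auto

lemma contra_functor_comp:
  assumes "contra_functor C D Fo Fm" "f \<in> hom C A B" "g \<in> hom C B E"
  shows "Fm (Cp C g f) = Cp D (Fm f) (Fm g)"
  using assms unfolding contra_functor_def hom_def by auto

lemma contra_functor_split:
  assumes C: "is_category C" and F: "contra_functor C D Fo Fm"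
    and k: "k \<in> hom C K M" and u: "u \<in> hom C M K" and uk: "Cp C u k = Id C K"
  shows "Cp D (Fm k) (Fm u) = Id D (Fo K)"
  using contra_functor_comp[OF F k u] uk contra_functor_id[OF F cat_hom_Ob(1)[OF C k]] by simp

section \<open>A left adjoint pair of contravariant functors\<close>

locale contra_left_adjunction =
  fixes CA :: "('a,'f) cat" and CB :: "('b,'g) cat"
    and Lo :: "'a \<Rightarrow> 'b" and Lm :: "'f \<Rightarrow> 'g"
    and Ro :: "'b \<Rightarrow> 'a" and Rm :: "'g \<Rightarrow> 'f"
    and phi :: "'a \<Rightarrow> 'b \<Rightarrow> 'g \<Rightarrow> 'f"
  assumes catA: "is_category CA" and catB: "is_category CB"
    and zero_A: "\<exists>Z. zero_obj CA Z" and zero_B: "\<exists>Z. zero_obj CB Z"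
    and kernels_B: "\<forall>f\<in>Ar CB. \<exists>k. is_kernel CB f k"
    and L: "contra_functor CA CB Lo Lm" and R: "contra_functor CB CA Ro Rm"
    and adj: "left_adjoint_pair CA CB Lo Lm Ro Rm phi"
begin

abbreviation "eps \<equiv> left_eps CA CB Lo Ro phi"
abbreviation "eta \<equiv> left_eta CB Lo phi"

lemma phi_bij: "A \<in> Ob CA \<Longrightarrow> B \<in> Ob CB \<Longrightarrow> bij_betw (phi A B) (hom CB (Lo A) B) (hom CA (Ro B) A)"
  using adj unfolding left_adjoint_pair_def by blast

lemma phi_hom: "A \<in> Ob CA \<Longrightarrow> B \<in> Ob CB \<Longrightarrow> g \<in> hom CB (Lo A) B \<Longrightarrow> phi A B g \<in> hom CA (Ro B) A"
  by (rule bij_betw_apply[OF phi_bij])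

lemma phi_inj:
  "A \<in> Ob CA \<Longrightarrow> B \<in> Ob CB \<Longrightarrow> g \<in> hom CB (Lo A) B \<Longrightarrow> g' \<in> hom CB (Lo A) B
   \<Longrightarrow> phi A B g = phi A B g' \<Longrightarrow> g = g'"
  using phi_bij[unfolded bij_betw_def inj_on_def] by blast

lemma phi_surj:
  assumes "A \<in> Ob CA" "B \<in> Ob CB" "a \<in> hom CA (Ro B) A"
  obtains g where "g \<in> hom CB (Lo A) B" "phi A B g = a"
proof -
  have "a \<in> phi A B ` hom CB (Lo A) B" using phi_bij[OF assms(1,2)] assms(3) by (simp add: bij_betw_def)
  then show thesis using that by blast
qed

lemma phi_natural:
  assumes "A \<in> Ob CA" "A' \<in> Ob CA" "B \<in> Ob CB" "B' \<in> Ob CB"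
    "a \<in> hom CA A A'" "b \<in> hom CB B B'" "g \<in> hom CB (Lo A) B"
  shows "phi A' B' (Cp CB b (Cp CB g (Lm a))) = Cp CA a (Cp CA (phi A B g) (Rm b))"
  using adj assms unfolding left_adjoint_pair_def by blast

lemma phi_precomp_L:
  assumes A: "A \<in> Ob CA" and A': "A' \<in> Ob CA" and B: "B \<in> Ob CB"
    and a: "a \<in> hom CA A A'" and g: "g \<in> hom CB (Lo A) B"
  shows "phi A' B (Cp CB g (Lm a)) = Cp CA a (phi A B g)"
proof -
  have "phi A' B (Cp CB (Id CB B) (Cp CB g (Lm a))) = Cp CA a (Cp CA (phi A B g) (Rm (Id CB B)))"
    using phi_natural[OF A A' B B a cat_id_hom[OF catB B] g] .
  then show ?thesis
    using cat_id_left[OF catB cat_comp_hom[OF catB contra_functor_hom[OF L a] g]]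
      contra_functor_id[OF R B] cat_id_right[OF catA phi_hom[OF A B g]] by simp
qed

lemma eta_hom: "A \<in> Ob CA \<Longrightarrow> eta A \<in> hom CA (Ro (Lo A)) A"
  unfolding left_eta_def using phi_hom contra_functor_Ob[OF L] cat_id_hom[OF catB] by blast

lemma phi_eq_eta:
  assumes A: "A \<in> Ob CA" and B: "B \<in> Ob CB" and g: "g \<in> hom CB (Lo A) B"
  shows "phi A B g = Cp CA (eta A) (Rm g)"
proof -
  have LA: "Lo A \<in> Ob CB" using contra_functor_Ob[OF L A] .
  have i: "Id CB (Lo A) \<in> hom CB (Lo A) (Lo A)" using cat_id_hom[OF catB LA] .
  have "phi A B (Cp CB g (Cp CB (Id CB (Lo A)) (Lm (Id CA A))))
      = Cp CA (Id CA A) (Cp CA (eta A) (Rm g))"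
    using phi_natural[OF A A LA B cat_id_hom[OF catA A] g i] unfolding left_eta_def .
  then show ?thesis
    using contra_functor_id[OF L A] cat_id_left[OF catB i] cat_id_right[OF catB g]
      cat_id_left[OF catA cat_comp_hom[OF catA contra_functor_hom[OF R g] eta_hom[OF A]]] by simp
qed

lemma phi_postcomp:
  assumes A: "A \<in> Ob CA" and B: "B \<in> Ob CB" and B': "B' \<in> Ob CB"
    and b: "b \<in> hom CB B B'" and g: "g \<in> hom CB (Lo A) B"
  shows "phi A B' (Cp CB b g) = Cp CA (phi A B g) (Rm b)"
  using phi_eq_eta[OF A B' cat_comp_hom[OF catB g b]] phi_eq_eta[OF A B g]
    contra_functor_comp[OF R g b]
    cat_assoc[OF catA contra_functor_hom[OF R b] contra_functor_hom[OF R g] eta_hom[OF A]]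
  by simp

lemma eps_hom: "B \<in> Ob CB \<Longrightarrow> eps B \<in> hom CB (Lo (Ro B)) B"
  and phi_eps: "B \<in> Ob CB \<Longrightarrow> phi (Ro B) B (eps B) = Id CA (Ro B)"
proof -
  assume B: "B \<in> Ob CB"
  have bij: "bij_betw (phi (Ro B) B) (hom CB (Lo (Ro B)) B) (hom CA (Ro B) (Ro B))"
    using phi_bij[OF contra_functor_Ob[OF R B] B] .
  have i: "Id CA (Ro B) \<in> hom CA (Ro B) (Ro B)" using cat_id_hom[OF catA contra_functor_Ob[OF R B]] .
  show "eps B \<in> hom CB (Lo (Ro B)) B"
    unfolding left_eps_def using bij i by (metis bij_betw_def inv_into_into)
  show "phi (Ro B) B (eps B) = Id CA (Ro B)"
    unfolding left_eps_def using bij i by (simp add: bij_betw_inv_into_right)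
qed

lemma triangle_identity: "B \<in> Ob CB \<Longrightarrow> Cp CA (eta (Ro B)) (Rm (eps B)) = Id CA (Ro B)"
  using phi_eq_eta[OF contra_functor_Ob[OF R] _ eps_hom] phi_eps by simp

lemma eps_natural:
  assumes B: "B \<in> Ob CB" and B': "B' \<in> Ob CB" and b: "b \<in> hom CB B B'"
  shows "Cp CB (eps B') (Lm (Rm b)) = Cp CB b (eps B)"
proof -
  have RB: "Ro B \<in> Ob CA" and RB': "Ro B' \<in> Ob CA" using contra_functor_Ob[OF R] B B' by auto
  have Rb: "Rm b \<in> hom CA (Ro B') (Ro B)" using contra_functor_hom[OF R b] .
  have "phi (Ro B) B' (Cp CB (eps B') (Lm (Rm b))) = Rm b"
    using phi_precomp_L[OF RB' RB B' Rb eps_hom[OF B']] phi_eps[OF B'] cat_id_right[OF catA Rb] by simp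
  moreover have "phi (Ro B) B' (Cp CB b (eps B)) = Rm b"
    using phi_postcomp[OF RB B B' b eps_hom[OF B]] phi_eps[OF B] cat_id_left[OF catA Rb] by simp
  ultimately show ?thesis
    using phi_inj[OF RB B' cat_comp_hom[OF catB contra_functor_hom[OF L Rb] eps_hom[OF B']]
        cat_comp_hom[OF catB eps_hom[OF B] b]] by simp
qed

lemma R_eq_phi_eps:
  assumes M: "M \<in> Ob CB" and N: "N \<in> Ob CB" and g: "g \<in> hom CB M N"
  shows "Rm g = phi (Ro M) N (Cp CB g (eps M))"
proof -
  have RM: "Ro M \<in> Ob CA" using contra_functor_Ob[OF R M] .
  have Rg: "Rm g \<in> hom CA (Ro N) (Ro M)" using contra_functor_hom[OF R g] .
  have "phi (Ro M) N (Cp CB g (eps M)) = Cp CA (eta (Ro M)) (Cp CA (Rm (eps M)) (Rm g))"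
    using phi_eq_eta[OF RM N cat_comp_hom[OF catB eps_hom[OF M] g]]
      contra_functor_comp[OF R eps_hom[OF M] g] by simp
  also have "\<dots> = Rm g"
    using cat_assoc[OF catA Rg contra_functor_hom[OF R eps_hom[OF M]] eta_hom[OF RM]]
      triangle_identity[OF M] cat_id_left[OF catA Rg] by simp
  finally show ?thesis by simp
qed

lemma eps_invE:
  assumes "M \<in> Ob CB" "iso CB (eps M)"
  obtains e where "e \<in> hom CB M (Lo (Ro M))"
    "Cp CB e (eps M) = Id CB (Lo (Ro M))" "Cp CB (eps M) e = Id CB M"
  using iso_invE[OF assms(2) eps_hom[OF assms(1)]] by blast

lemma R_full:
  assumes M: "M \<in> Ob CB" and N: "N \<in> Ob CB" and iM: "iso CB (eps M)"
    and g: "g \<in> hom CA (Ro N) (Ro M)"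
  obtains f where "f \<in> hom CB M N" "Rm f = g"
proof -
  obtain e where e: "e \<in> hom CB M (Lo (Ro M))" "Cp CB e (eps M) = Id CB (Lo (Ro M))"
    using eps_invE[OF M iM] by blast
  obtain g' where g': "g' \<in> hom CB (Lo (Ro M)) N" "phi (Ro M) N g' = g"
    using phi_surj[OF contra_functor_Ob[OF R M] N g] by blast
  have f: "Cp CB g' e \<in> hom CB M N" using cat_comp_hom[OF catB e(1) g'(1)] .
  have "Rm (Cp CB g' e) = phi (Ro M) N (Cp CB g' (Cp CB e (eps M)))"
    using R_eq_phi_eps[OF M N f] cat_assoc[OF catB eps_hom[OF M] e(1) g'(1)] by simp
  also have "\<dots> = g" using e(2) cat_id_right[OF catB g'(1)] g'(2) by simp
  finally show thesis using that f by blast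
qed

lemma R_zero_obj:
  assumes Z: "zero_obj CB Z" shows "zero_obj CA (Ro Z)"
proof -
  have ZO: "Z \<in> Ob CB" using Z by (simp add: zero_obj_def)
  obtain Z' where Z': "zero_obj CA Z'" using zero_A by blast
  have "\<exists>!f. f \<in> hom CA (Ro Z) A" if A: "A \<in> Ob CA" for A
  proof -
    have "\<exists>!g. g \<in> hom CB (Lo A) Z" using Z contra_functor_Ob[OF L A] by (simp add: zero_obj_def)
    then show ?thesis using bij_betw_ex1[OF bij_betw_inv_into[OF phi_bij[OF A ZO]]] by blast
  qed
  then show ?thesis using zero_obj_if_initial[OF catA Z' contra_functor_Ob[OF R ZO]] by blast
qed

lemma L_zero_obj:
  assumes Z: "zero_obj CA Z" shows "zero_obj CB (Lo Z)"
proof -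
  have ZO: "Z \<in> Ob CA" using Z by (simp add: zero_obj_def)
  obtain Z' where Z': "zero_obj CB Z'" using zero_B by blast
  have "\<exists>!g. g \<in> hom CB (Lo Z) B" if B: "B \<in> Ob CB" for B
  proof -
    have "\<exists>!f. f \<in> hom CA (Ro B) Z" using Z contra_functor_Ob[OF R B] by (simp add: zero_obj_def)
    then show ?thesis using bij_betw_ex1[OF phi_bij[OF ZO B]] by blast
  qed
  then show ?thesis using zero_obj_if_initial[OF catB Z' contra_functor_Ob[OF L ZO]] by blast
qed

lemma R_zero_arr:
  assumes z: "zero_arr CB f" shows "zero_arr CA (Rm f)"
proof -
  from z obtain Z a b where Z: "zero_obj CB Z" and a: "a \<in> hom CB (Dom CB f) Z"
    and b: "b \<in> hom CB Z (Cod CB f)" and f: "f = Cp CB b a" unfolding zero_arr_def by blast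
  show ?thesis
    using zero_arr_through[OF catA R_zero_obj[OF Z] contra_functor_hom[OF R b] contra_functor_hom[OF R a]]
      contra_functor_comp[OF R a b] f by simp
qed

lemma phi_reflects_zero:
  assumes A: "A \<in> Ob CA" and B: "B \<in> Ob CB" and h: "h \<in> hom CB (Lo A) B"
    and z: "zero_arr CA (phi A B h)"
  shows "zero_arr CB h"
proof -
  from z obtain Z a b where Z: "zero_obj CA Z" and a: "a \<in> hom CA (Ro B) Z"
    and b: "b \<in> hom CA Z A" and ab: "phi A B h = Cp CA b a"
    unfolding zero_arr_def using phi_hom[OF A B h] by (simp add: hom_def) blast
  have ZO: "Z \<in> Ob CA" using Z by (simp add: zero_obj_def)
  obtain g where g: "g \<in> hom CB (Lo Z) B" "phi Z B g = a" using phi_surj[OF ZO B a] by blast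
  have gLb: "Cp CB g (Lm b) \<in> hom CB (Lo A) B"
    using cat_comp_hom[OF catB contra_functor_hom[OF L b] g(1)] .
  have "phi A B (Cp CB g (Lm b)) = phi A B h" using phi_precomp_L[OF ZO A B b g(1)] g(2) ab by simp
  then have "h = Cp CB g (Lm b)" using phi_inj[OF A B h gLb] by simp
  then show ?thesis
    using zero_arr_through[OF catB L_zero_obj[OF Z] contra_functor_hom[OF L b] g(1)] by simp
qed

lemma R_reflects_zero:
  assumes M: "M \<in> Ob CB" and N: "N \<in> Ob CB" and iM: "iso CB (eps M)"
    and g: "g \<in> hom CB M N" and z: "zero_arr CA (Rm g)"
  shows "zero_arr CB g"
proof -
  obtain e where e: "e \<in> hom CB M (Lo (Ro M))" "Cp CB (eps M) e = Id CB M"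
    using eps_invE[OF M iM] by blast
  have ge: "Cp CB g (eps M) \<in> hom CB (Lo (Ro M)) N" using cat_comp_hom[OF catB eps_hom[OF M] g] .
  have "zero_arr CB (Cp CB g (eps M))"
    using phi_reflects_zero[OF contra_functor_Ob[OF R M] N ge] R_eq_phi_eps[OF M N g] z by simp
  then have "zero_arr CB (Cp CB (Cp CB g (eps M)) e)"
    using zero_arr_comp_right[OF catB] e(1) ge by (simp add: hom_def)
  moreover have "Cp CB (Cp CB g (eps M)) e = g"
    using cat_assoc[OF catB e(1) eps_hom[OF M] g] e(2) cat_id_right[OF catB g] by simp
  ultimately show ?thesis by simp
qed

lemma R_kernel_cokernel:
  assumes k: "is_kernel CB f k" shows "is_cokernel CA (Rm f) (Rm k)"
proof -
  define M N K where "M = Dom CB f" and "N = Cod CB f" and "K = Dom CB k"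
  have f: "f \<in> hom CB M N" and kh: "k \<in> hom CB K M"
    using k by (auto simp: is_kernel_def hom_def M_def N_def K_def)
  have MO: "M \<in> Ob CB" and NO: "N \<in> Ob CB" and KO: "K \<in> Ob CB"
    using cat_hom_Ob[OF catB f] cat_hom_Ob[OF catB kh] by auto
  have Rf: "Rm f \<in> hom CA (Ro N) (Ro M)" and Rk: "Rm k \<in> hom CA (Ro M) (Ro K)"
    using contra_functor_hom[OF R f] contra_functor_hom[OF R kh] .
  have factor: "\<exists>!u. u \<in> hom CA (Ro K) X \<and> Cp CA u (Rm k) = g"
    if g: "g \<in> hom CA (Ro M) X" and z: "zero_arr CA (Cp CA g (Rm f))" for g X
  proof -
    have XO: "X \<in> Ob CA" using cat_hom_Ob(2)[OF catA g] .
    obtain g' where g': "g' \<in> hom CB (Lo X) M" "phi X M g' = g" using phi_surj[OF XO MO g] by blast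
    have "phi X N (Cp CB f g') = Cp CA g (Rm f)" using phi_postcomp[OF XO MO NO f g'(1)] g'(2) by simp
    then have "zero_arr CB (Cp CB f g')"
      using phi_reflects_zero[OF XO NO cat_comp_hom[OF catB g'(1) f]] z by simp
    then obtain v where v: "v \<in> hom CB (Lo X) K" "Cp CB k v = g'"
      using kernel_factor[OF k g'(1)[unfolded M_def]] K_def by blast
    have v_factor: "Cp CA (phi X K v) (Rm k) = g"
      using phi_postcomp[OF XO KO MO kh v(1)] v(2) g'(2) by simp
    have "u = phi X K v" if u: "u \<in> hom CA (Ro K) X" "Cp CA u (Rm k) = g" for u
    proof -
      obtain w where w: "w \<in> hom CB (Lo X) K" "phi X K w = u" using phi_surj[OF XO KO u(1)] by blast
      have "phi X M (Cp CB k w) = phi X M (Cp CB k v)"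
        using phi_postcomp[OF XO KO MO kh w(1)] phi_postcomp[OF XO KO MO kh v(1)]
          w(2) u(2) v_factor by simp
      then have "Cp CB k w = Cp CB k v"
        using phi_inj[OF XO MO cat_comp_hom[OF catB w(1) kh] cat_comp_hom[OF catB v(1) kh]] by simp
      then show ?thesis using mono_cancel[OF kernel_mono[OF catB k] kh w(1) v(1)] w(2) by simp
    qed
    then show ?thesis using phi_hom[OF XO KO v(1)] v_factor by blast
  qed
  show ?thesis unfolding is_cokernel_def
  proof (intro conjI ballI impI)
    show "Rm f \<in> Ar CA" "Rm k \<in> Ar CA" "Dom CA (Rm k) = Cod CA (Rm f)"
      using Rf Rk by (auto simp: hom_def)
    show "zero_arr CA (Cp CA (Rm k) (Rm f))"
      using R_zero_arr[of "Cp CB f k"] k contra_functor_comp[OF R kh f]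
      by (simp add: is_kernel_def)
  next
    fix g assume "g \<in> Ar CA" "Dom CA g = Cod CA (Rm f)" "zero_arr CA (Cp CA g (Rm f))"
    then show "\<exists>!u. u \<in> hom CA (Cod CA (Rm k)) (Cod CA g) \<and> Cp CA u (Rm k) = g"
      using factor[of g "Cod CA g"] Rf Rk by (simp add: hom_def)
  qed
qed

lemma eps_iso_if_retract:
  assumes M: "M \<in> Ob CB" and iM: "iso CB (eps M)"
    and k: "k \<in> hom CB K M" and u: "u \<in> hom CB M K" and uk: "Cp CB u k = Id CB K"
  shows "iso CB (eps K)"
proof -
  have KO: "K \<in> Ob CB" using cat_hom_Ob[OF catB k] by simp
  obtain e where e: "e \<in> hom CB M (Lo (Ro M))" "Cp CB e (eps M) = Id CB (Lo (Ro M))"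
    "Cp CB (eps M) e = Id CB M"
    using eps_invE[OF M iM] by blast
  have eM: "eps M \<in> hom CB (Lo (Ro M)) M" and eK: "eps K \<in> hom CB (Lo (Ro K)) K"
    using eps_hom KO M by auto
  have LRu: "Lm (Rm u) \<in> hom CB (Lo (Ro M)) (Lo (Ro K))"
    and LRk: "Lm (Rm k) \<in> hom CB (Lo (Ro K)) (Lo (Ro M))"
    using contra_functor_hom[OF L contra_functor_hom[OF R u]]
      contra_functor_hom[OF L contra_functor_hom[OF R k]] by auto
  define w where "w = Cp CB (Lm (Rm u)) (Cp CB e k)"
  have ek: "Cp CB e k \<in> hom CB K (Lo (Ro M))" using cat_comp_hom[OF catB k e(1)] .
  have wh: "w \<in> hom CB K (Lo (Ro K))" unfolding w_def using cat_comp_hom[OF catB ek LRu] .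
  have "Cp CB (eps K) w = Cp CB (Cp CB u (eps M)) (Cp CB e k)"
    unfolding w_def using cat_assoc[OF catB ek LRu eK] eps_natural[OF M KO u] by simp
  also have "\<dots> = Cp CB u (Cp CB (Cp CB (eps M) e) k)"
    using cat_assoc[OF catB ek eM u] cat_assoc[OF catB k e(1) eM] by simp
  also have "\<dots> = Id CB K" using e(3) cat_id_left[OF catB k] uk by simp
  finally have right_inv: "Cp CB (eps K) w = Id CB K" .
  have "Cp CB w (eps K) = Cp CB (Lm (Rm u)) (Cp CB e (Cp CB (eps M) (Lm (Rm k))))"
    unfolding w_def using cat_assoc[OF catB eK ek LRu] cat_assoc[OF catB eK k e(1)]
      eps_natural[OF KO M k] by simp
  also have "\<dots> = Cp CB (Lm (Rm u)) (Lm (Rm k))"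
    using cat_assoc[OF catB LRk eM e(1)] e(2) cat_id_left[OF catB LRk] by simp
  also have "\<dots> = Id CB (Lo (Ro K))"
    using contra_functor_split[OF catA L contra_functor_hom[OF R u] contra_functor_hom[OF R k]
        contra_functor_split[OF catB R k u uk]] .
  finally show ?thesis using isoI[OF eK wh _ right_inv] by blast
qed

lemma eps_epi_if_quotient:
  assumes M: "M \<in> Ob CB" and iM: "iso CB (eps M)" and p: "p \<in> hom CB M K" and "epi CB p"
  shows "epi CB (eps K)"
proof -
  have KO: "K \<in> Ob CB" using cat_hom_Ob[OF catB p] by simp
  have "epi CB (Cp CB p (eps M))"
    using epi_comp[OF catB eps_hom[OF M] p iso_epi[OF catB iM] \<open>epi CB p\<close>] .
  then have "epi CB (Cp CB (eps K) (Lm (Rm p)))" using eps_natural[OF M KO p] by simp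
  then show ?thesis
    using epi_comp_left_factor[OF catB contra_functor_hom[OF L contra_functor_hom[OF R p]]
        eps_hom[OF KO]] by blast
qed

lemma R_kernel_fully_coinvariant:
  assumes f: "f \<in> hom CB M N" and k: "is_kernel CB f k" and iM: "iso CB (eps M)"
    and fi: "fully_invariant CB k"
  shows "fully_coinvariant CA (Rm k)"
  unfolding fully_coinvariant_def
proof (intro conjI ballI)
  have kh: "k \<in> hom CB (Dom CB k) M" using kernel_hom[OF k f] .
  have MO: "M \<in> Ob CB" using cat_hom_Ob[OF catB f] by simp
  have Rk: "Rm k \<in> hom CA (Ro M) (Ro (Dom CB k))" using contra_functor_hom[OF R kh] .
  show "epi CA (Rm k)" using cokernel_epi[OF catA R_kernel_cokernel[OF k]] .
  fix h assume "h \<in> hom CA (Dom CA (Rm k)) (Dom CA (Rm k))"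
  then have h: "h \<in> hom CA (Ro M) (Ro M)" using Rk by (simp add: hom_def)
  obtain h' where h': "h' \<in> hom CB M M" "Rm h' = h" using R_full[OF MO MO iM h] by blast
  have "h' \<in> hom CB (Cod CB k) (Cod CB k)" using h'(1) kh by (simp add: hom_def)
  then obtain \<alpha> where \<alpha>: "\<alpha> \<in> hom CB (Dom CB k) (Dom CB k)" "Cp CB h' k = Cp CB k \<alpha>"
    using fi unfolding fully_invariant_def by blast
  have "Cp CA (Rm k) h = Cp CA (Rm \<alpha>) (Rm k)"
    using contra_functor_comp[OF R kh h'(1)] contra_functor_comp[OF R \<alpha>(1) kh] \<alpha>(2) h'(2) by simp
  moreover have "Rm \<alpha> \<in> hom CA (Cod CA (Rm k)) (Cod CA (Rm k))"
    using contra_functor_hom[OF R \<alpha>(1)] Rk by (simp add: hom_def)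
  ultimately show "\<exists>\<gamma>\<in>hom CA (Cod CA (Rm k)) (Cod CA (Rm k)). Cp CA (Rm k) h = Cp CA \<gamma> (Rm k)"
    by blast
qed

text \<open>The candidate retraction of \<open>k\<close> is \<open>\<epsilon>\<^sub>K \<circ> L(s) \<circ> \<epsilon>\<^sub>M\<^sup>-\<^sup>1\<close>, where \<open>s\<close> is a section of
  \<open>R(k)\<close>; it is a left inverse of \<open>k\<close> after precomposition with the epimorphism \<open>\<epsilon>\<^sub>K\<close>.\<close>
lemma kernel_section_if_R_retraction:
  assumes f: "f \<in> hom CB M N" and k: "is_kernel CB f k" and iM: "iso CB (eps M)"
    and eK: "epi CB (eps (Dom CB k))" and rt: "retraction CA (Rm k)"
  shows "section CB k"
proof -
  define K where "K = Dom CB k"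
  have kh: "k \<in> hom CB K M" using kernel_hom[OF k f] K_def by simp
  have MO: "M \<in> Ob CB" and KO: "K \<in> Ob CB" using cat_hom_Ob[OF catB kh] by auto
  have Rk: "Rm k \<in> hom CA (Ro M) (Ro K)" using contra_functor_hom[OF R kh] .
  obtain s where s: "s \<in> hom CA (Ro K) (Ro M)" "Cp CA (Rm k) s = Id CA (Ro K)"
    using rt Rk unfolding retraction_def by (auto simp: hom_def)
  obtain e where e: "e \<in> hom CB M (Lo (Ro M))" "Cp CB e (eps M) = Id CB (Lo (Ro M))"
    using eps_invE[OF MO iM] by blast
  have eM: "eps M \<in> hom CB (Lo (Ro M)) M" and eK': "eps K \<in> hom CB (Lo (Ro K)) K"
    using eps_hom KO MO by auto
  have Ls: "Lm s \<in> hom CB (Lo (Ro M)) (Lo (Ro K))" using contra_functor_hom[OF L s(1)] .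
  have LRk: "Lm (Rm k) \<in> hom CB (Lo (Ro K)) (Lo (Ro M))" using contra_functor_hom[OF L Rk] .
  define u where "u = Cp CB (eps K) (Cp CB (Lm s) e)"
  have Lse: "Cp CB (Lm s) e \<in> hom CB M (Lo (Ro K))" using cat_comp_hom[OF catB e(1) Ls] .
  have uh: "u \<in> hom CB M K" unfolding u_def using cat_comp_hom[OF catB Lse eK'] .
  have u_eps: "Cp CB u (eps M) = Cp CB (eps K) (Lm s)"
    unfolding u_def using cat_assoc[OF catB eM Lse eK'] cat_assoc[OF catB eM e(1) Ls] e(2)
      cat_id_right[OF catB Ls] by simp
  have "Cp CB (Cp CB u k) (eps K) = Cp CB (Cp CB u (eps M)) (Lm (Rm k))"
    using cat_assoc[OF catB eK' kh uh] eps_natural[OF KO MO kh] cat_assoc[OF catB LRk eM uh] by simp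
  also have "\<dots> = Cp CB (eps K) (Cp CB (Lm s) (Lm (Rm k)))"
    using u_eps cat_assoc[OF catB LRk Ls eK'] by simp
  also have "\<dots> = Cp CB (Id CB K) (eps K)"
    using contra_functor_split[OF catA L s(1) Rk s(2)] cat_id_right[OF catB eK'] cat_id_left[OF catB eK']
    by simp
  finally have "Cp CB u k = Id CB K"
    by (rule epi_cancel[OF eK[folded K_def] eK' cat_comp_hom[OF catB kh uh] cat_id_hom[OF catB KO]])
  then show ?thesis using kh uh unfolding section_def hom_def by auto
qed

lemma kernel_fully_invariant_if_R_fully_coinvariant:
  assumes f: "f \<in> hom CB M N" and k: "is_kernel CB f k" and iK: "iso CB (eps (Dom CB k))"
    and fc: "fully_coinvariant CA (Rm k)"
  shows "fully_invariant CB k"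
  unfolding fully_invariant_def
proof (intro conjI ballI)
  define K where "K = Dom CB k"
  have kh: "k \<in> hom CB K M" using kernel_hom[OF k f] K_def by simp
  have KO: "K \<in> Ob CB" and NO: "N \<in> Ob CB" using cat_hom_Ob[OF catB kh] cat_hom_Ob[OF catB f] by auto
  have Rk: "Rm k \<in> hom CA (Ro M) (Ro K)" and Rf: "Rm f \<in> hom CA (Ro N) (Ro M)"
    using contra_functor_hom[OF R kh] contra_functor_hom[OF R f] .
  show "mono CB k" using kernel_mono[OF catB k] .
  fix h assume "h \<in> hom CB (Cod CB k) (Cod CB k)"
  then have h: "h \<in> hom CB M M" using kh by (simp add: hom_def)
  have hk: "Cp CB h k \<in> hom CB K M" using cat_comp_hom[OF catB kh h] .
  obtain \<gamma> where \<gamma>: "\<gamma> \<in> hom CA (Ro K) (Ro K)" "Cp CA (Rm k) (Rm h) = Cp CA \<gamma> (Rm k)"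
    using fc contra_functor_hom[OF R h] Rk unfolding fully_coinvariant_def by (auto simp: hom_def)
  have "Rm (Cp CB f (Cp CB h k)) = Cp CA (Cp CA (Rm k) (Rm h)) (Rm f)"
    using contra_functor_comp[OF R hk f] contra_functor_comp[OF R kh h] by simp
  also have "\<dots> = Cp CA \<gamma> (Cp CA (Rm k) (Rm f))"
    using \<gamma>(2) cat_assoc[OF catA Rf Rk \<gamma>(1)] by simp
  finally have "zero_arr CA (Rm (Cp CB f (Cp CB h k)))"
    using zero_arr_comp_left[OF catA cokernel_zero[OF R_kernel_cokernel[OF k]]] \<gamma>(1)
      cat_comp_hom[OF catA Rf Rk] by (simp add: hom_def)
  then have "zero_arr CB (Cp CB f (Cp CB h k))"
    using R_reflects_zero[OF KO NO iK[folded K_def] cat_comp_hom[OF catB hk f]] by simp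
  moreover have "Cp CB h k \<in> hom CB K (Dom CB f)" using hk f by (simp add: hom_def)
  ultimately obtain \<alpha> where "\<alpha> \<in> hom CB K K" "Cp CB k \<alpha> = Cp CB h k"
    using kernel_factor[OF k] K_def by blast
  then show "\<exists>\<alpha>\<in>hom CB (Dom CB k) (Dom CB k). Cp CB h k = Cp CB k \<alpha>" by (metis K_def)
qed

lemma dual_strongly_rickart_if_strongly_rickart:
  assumes M: "M \<in> Ob CB" and N: "N \<in> Ob CB" and iM: "iso CB (eps M)"
    and SR: "strongly_rickart CB M N"
  shows "dual_strongly_rickart CA (Ro N) (Ro M)"
  unfolding dual_strongly_rickart_def
proof (intro ballI allI impI)
  fix g c assume g: "g \<in> hom CA (Ro N) (Ro M)" and c: "is_cokernel CA g c"
  obtain f where f: "f \<in> hom CB M N" "Rm f = g" using R_full[OF M N iM g] by blast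
  obtain k where k: "is_kernel CB f k" using kernels_B f by (auto simp: hom_def)
  obtain u where u: "u \<in> hom CB M (Dom CB k)" "Cp CB u k = Id CB (Dom CB k)"
    using strongly_rickart_kernel_retract[OF SR f(1) k] .
  have kh: "k \<in> hom CB (Dom CB k) M" using kernel_hom[OF k f(1)] .
  have "retraction CA (Rm k)"
    using contra_functor_split[OF catB R kh u] contra_functor_hom[OF R kh] contra_functor_hom[OF R u(1)]
    unfolding retraction_def hom_def by auto
  moreover have "fully_coinvariant CA (Rm k)"
    using R_kernel_fully_coinvariant[OF f(1) k iM] SR f(1) k unfolding strongly_rickart_def by blast
  moreover have "is_cokernel CA g (Rm k)" using R_kernel_cokernel[OF k] f(2) by simp
  ultimately show "fully_coinvariant CA c \<and> retraction CA c"
    using cokernel_fully_coinvariant_retraction[OF catA _ c] by blast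
qed

lemma strongly_rickart_if_dual:
  assumes M: "M \<in> Ob CB" and iM: "iso CB (eps M)"
    and DSR: "dual_strongly_rickart CA (Ro N) (Ro M)"
    and eps_epi: "\<forall>f\<in>hom CB M N. \<forall>k. is_kernel CB f k \<longrightarrow> epi CB (eps (Dom CB k))"
  shows "strongly_rickart CB M N"
  unfolding strongly_rickart_def
proof (intro ballI allI impI)
  fix f k assume f: "f \<in> hom CB M N" and k: "is_kernel CB f k"
  have "fully_coinvariant CA (Rm k)" and "retraction CA (Rm k)"
    using DSR contra_functor_hom[OF R f] R_kernel_cokernel[OF k]
    unfolding dual_strongly_rickart_def by auto
  moreover from this have sec: "section CB k"
    using kernel_section_if_R_retraction[OF f k iM] eps_epi f k by blast
  moreover have "iso CB (eps (Dom CB k))"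
    using sec eps_iso_if_retract[OF M iM kernel_hom[OF k f]] kernel_hom[OF k f]
    unfolding section_def hom_def by auto
  ultimately show "fully_invariant CB k \<and> section CB k"
    using kernel_fully_invariant_if_R_fully_coinvariant[OF f k] by blast
qed

lemma strongly_rickart_iff_cyclic:
  assumes M: "M \<in> Ob CB" and N: "N \<in> Ob CB" and iM: "iso CB (eps M)"
  shows "strongly_rickart CB M N \<longleftrightarrow>
    dual_strongly_rickart CA (Ro N) (Ro M) \<and>
    (\<forall>f\<in>hom CB M N. \<forall>k. is_kernel CB f k \<longrightarrow> cyclic CB M (Dom CB k))"
proof
  assume SR: "strongly_rickart CB M N"
  have "cyclic CB M (Dom CB k)" if f: "f \<in> hom CB M N" and k: "is_kernel CB f k" for f k
  proof -
    obtain u where "u \<in> hom CB M (Dom CB k)" "Cp CB u k = Id CB (Dom CB k)"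
      using strongly_rickart_kernel_retract[OF SR f k] .
    then show ?thesis using split_epi[OF catB _ kernel_hom[OF k f]] unfolding cyclic_def by blast
  qed
  then show "dual_strongly_rickart CA (Ro N) (Ro M) \<and>
    (\<forall>f\<in>hom CB M N. \<forall>k. is_kernel CB f k \<longrightarrow> cyclic CB M (Dom CB k))"
    using dual_strongly_rickart_if_strongly_rickart[OF M N iM SR] by blast
next
  assume "dual_strongly_rickart CA (Ro N) (Ro M) \<and>
    (\<forall>f\<in>hom CB M N. \<forall>k. is_kernel CB f k \<longrightarrow> cyclic CB M (Dom CB k))"
  moreover have "epi CB (eps K)" if "cyclic CB M K" for K
    using that eps_epi_if_quotient[OF M iM] unfolding cyclic_def by blast
  ultimately show "strongly_rickart CB M N"
    using strongly_rickart_if_dual[OF M iM] by blast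
qed

lemma strongly_rickart_iff_reflexive:
  assumes M: "M \<in> Ob CB" and N: "N \<in> Ob CB" and iM: "iso CB (eps M)"
  shows "strongly_rickart CB M N \<longleftrightarrow>
    dual_strongly_rickart CA (Ro N) (Ro M) \<and>
    (\<forall>f\<in>hom CB M N. \<forall>k. is_kernel CB f k \<longrightarrow> iso CB (eps (Dom CB k)))"
proof
  assume SR: "strongly_rickart CB M N"
  have "iso CB (eps (Dom CB k))" if f: "f \<in> hom CB M N" and k: "is_kernel CB f k" for f k
    using strongly_rickart_kernel_retract[OF SR f k] eps_iso_if_retract[OF M iM kernel_hom[OF k f]]
    by blast
  then show "dual_strongly_rickart CA (Ro N) (Ro M) \<and>
    (\<forall>f\<in>hom CB M N. \<forall>k. is_kernel CB f k \<longrightarrow> iso CB (eps (Dom CB k)))"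
    using dual_strongly_rickart_if_strongly_rickart[OF M N iM SR] by blast
next
  assume "dual_strongly_rickart CA (Ro N) (Ro M) \<and>
    (\<forall>f\<in>hom CB M N. \<forall>k. is_kernel CB f k \<longrightarrow> iso CB (eps (Dom CB k)))"
  then show "strongly_rickart CB M N"
    using strongly_rickart_if_dual[OF M iM] iso_epi[OF catB] by blast
qed

end

section \<open>Duality\<close>

definition op_cat :: "('o,'m) cat \<Rightarrow> ('o,'m) cat" where
  "op_cat C = \<lparr>Ob = Ob C, Ar = Ar C, Dom = Cod C, Cod = Dom C, Cp = (\<lambda>g f. Cp C f g), Id = Id C\<rparr>"

lemma op_cat_simps[simp]:
  "Ob (op_cat C) = Ob C" "Ar (op_cat C) = Ar C" "Dom (op_cat C) = Cod C"
  "Cod (op_cat C) = Dom C" "Cp (op_cat C) g f = Cp C f g" "Id (op_cat C) = Id C"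
  by (simp_all add: op_cat_def)

lemma hom_op[simp]: "hom (op_cat C) A B = hom C B A"
  by (auto simp: hom_def)

lemma is_category_op: "is_category C \<Longrightarrow> is_category (op_cat C)"
  unfolding is_category_def by (auto simp: hom_def)

lemma mono_op[simp]: "mono (op_cat C) f = epi C f"
  unfolding mono_def epi_def by auto

lemma epi_op[simp]: "epi (op_cat C) f = mono C f"
  unfolding mono_def epi_def by auto

lemma iso_op[simp]: "iso (op_cat C) f = iso C f"
  unfolding iso_def by auto

lemma zero_obj_op[simp]: "zero_obj (op_cat C) Z = zero_obj C Z"
  unfolding zero_obj_def by auto

lemma zero_arr_op[simp]: "zero_arr (op_cat C) f = zero_arr C f"
  unfolding zero_arr_def by auto

lemma is_kernel_op[simp]: "is_kernel (op_cat C) f k = is_cokernel C f k"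
  unfolding is_kernel_def is_cokernel_def by auto

lemma strongly_rickart_op[simp]: "strongly_rickart (op_cat C) M N = dual_strongly_rickart C N M"
  unfolding strongly_rickart_def dual_strongly_rickart_def fully_invariant_def
    fully_coinvariant_def section_def retraction_def is_kernel_def is_cokernel_def by auto

lemma dual_strongly_rickart_op[simp]:
  "dual_strongly_rickart (op_cat C) M N = strongly_rickart C N M"
  unfolding strongly_rickart_def dual_strongly_rickart_def fully_invariant_def
    fully_coinvariant_def section_def retraction_def is_kernel_def is_cokernel_def by auto

lemma cyclic_op[simp]: "cyclic (op_cat C) X Y = cocyclic C Y X"
  unfolding cyclic_def cocyclic_def by auto

lemma contra_functor_op:
  "contra_functor C D Fo Fm \<Longrightarrow> contra_functor (op_cat C) (op_cat D) Fo Fm"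
  unfolding contra_functor_def by (auto simp: hom_def)

lemma left_adjoint_pair_op:
  assumes CA: "is_category CA" and CB: "is_category CB" and L: "contra_functor CA CB Lo Lm"
    and R: "contra_functor CB CA Ro Rm" and adj: "right_adjoint_pair CA CB Lo Lm Ro Rm psi"
  shows "left_adjoint_pair (op_cat CB) (op_cat CA) Ro Rm Lo Lm (\<lambda>A B. psi B A)"
  unfolding left_adjoint_pair_def
proof (intro conjI ballI)
  fix A B assume "A \<in> Ob (op_cat CB)" "B \<in> Ob (op_cat CA)"
  then show "bij_betw (psi B A) (hom (op_cat CA) (Ro A) B) (hom (op_cat CB) (Lo B) A)"
    using adj unfolding right_adjoint_pair_def by simp
next
  fix A A' B B' a b g
  assume A: "A \<in> Ob (op_cat CB)" and A': "A' \<in> Ob (op_cat CB)"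
    and B: "B \<in> Ob (op_cat CA)" and B': "B' \<in> Ob (op_cat CA)"
    and "a \<in> hom (op_cat CB) A A'" "b \<in> hom (op_cat CA) B B'" "g \<in> hom (op_cat CA) (Ro A) B"
  then have a: "a \<in> hom CB A' A" and b: "b \<in> hom CA B' B" and g: "g \<in> hom CA B (Ro A)" by auto
  have "psi B' A' (Cp CA (Rm a) (Cp CA g b)) = Cp CB (Lm b) (Cp CB (psi B A g) a)"
    using adj A A' B B' a b g unfolding right_adjoint_pair_def by simp
  moreover have "psi B A g \<in> hom CB A (Lo B)"
    using adj A B g unfolding right_adjoint_pair_def bij_betw_def by auto
  ultimately show "psi B' A' (Cp (op_cat CA) b (Cp (op_cat CA) g (Rm a))) =
      Cp (op_cat CB) a (Cp (op_cat CB) (psi B A g) (Lm b))"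
    using cat_assoc[OF CA b g contra_functor_hom[OF R a]]
      cat_assoc[OF CB a _ contra_functor_hom[OF L b]] by simp
qed

lemma left_eps_op:
  "left_eps (op_cat CB) (op_cat CA) Ro Lo (\<lambda>A B. psi B A) B = right_eta CA CB Lo Ro psi B"
  unfolding left_eps_def right_eta_def by simp

lemma left_adjoint_strongly_rickart_iff:
  assumes "abelian CA" "abelian CB" "contra_functor CA CB Lo Lm" "contra_functor CB CA Ro Rm"
    and "left_adjoint_pair CA CB Lo Lm Ro Rm phi"
    and M: "M \<in> Ob CB" and N: "N \<in> Ob CB" and iM: "iso CB (left_eps CA CB Lo Ro phi M)"
  shows "(strongly_rickart CB M N \<longleftrightarrow>
          dual_strongly_rickart CA (Ro N) (Ro M) \<and>
          (\<forall>f\<in>hom CB M N. \<forall>k. is_kernel CB f k \<longrightarrow> cyclic CB M (Dom CB k))) \<and>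
       (strongly_rickart CB M N \<longleftrightarrow>
          dual_strongly_rickart CA (Ro N) (Ro M) \<and>
          (\<forall>f\<in>hom CB M N. \<forall>k. is_kernel CB f k \<longrightarrow>
             iso CB (left_eps CA CB Lo Ro phi (Dom CB k))))"
proof -
  interpret contra_left_adjunction CA CB Lo Lm Ro Rm phi
    using assms(1-5) unfolding contra_left_adjunction_def abelian_def by auto
  show ?thesis using strongly_rickart_iff_cyclic[OF M N iM] strongly_rickart_iff_reflexive[OF M N iM]
    by blast
qed

lemma right_adjoint_dual_strongly_rickart_iff:
  assumes CA: "abelian CA" and CB: "abelian CB"
    and L: "contra_functor CA CB Lo Lm" and R: "contra_functor CB CA Ro Rm"
    and adj: "right_adjoint_pair CA CB Lo Lm Ro Rm psi"
    and M: "M \<in> Ob CA" and N: "N \<in> Ob CA" and iN: "iso CA (right_eta CA CB Lo Ro psi N)"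
  shows "(dual_strongly_rickart CA M N \<longleftrightarrow>
          strongly_rickart CB (Lo N) (Lo M) \<and>
          (\<forall>f\<in>hom CA M N. \<forall>c. is_cokernel CA f c \<longrightarrow> cocyclic CA (Cod CA c) N)) \<and>
       (dual_strongly_rickart CA M N \<longleftrightarrow>
          strongly_rickart CB (Lo N) (Lo M) \<and>
          (\<forall>f\<in>hom CA M N. \<forall>c. is_cokernel CA f c \<longrightarrow>
             iso CA (right_eta CA CB Lo Ro psi (Cod CA c))))"
proof -
  have cA: "is_category CA" and cB: "is_category CB" using CA CB by (auto simp: abelian_def)
  interpret op: contra_left_adjunction "op_cat CB" "op_cat CA" Ro Rm Lo Lm "\<lambda>A B. psi B A"
    using CA CB is_category_op[OF cA] is_category_op[OF cB] contra_functor_op[OF L]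
      contra_functor_op[OF R] left_adjoint_pair_op[OF cA cB L R adj]
    unfolding contra_left_adjunction_def abelian_def by auto
  show ?thesis
    using op.strongly_rickart_iff_cyclic[of N M] op.strongly_rickart_iff_reflexive[of N M] M N iN
    unfolding left_eps_op by simp
qed

theorem theorem4p10:
  fixes CA :: "('a,'f) cat" and CB :: "('b,'g) cat"
    and Lo :: "'a \<Rightarrow> 'b" and Lm :: "'f \<Rightarrow> 'g"
    and Ro :: "'b \<Rightarrow> 'a" and Rm :: "'g \<Rightarrow> 'f"
  assumes "abelian CA" and "abelian CB"
    and "contra_functor CA CB Lo Lm" and "contra_functor CB CA Ro Rm"
  shows
   "(\<forall>phi M N. left_adjoint_pair CA CB Lo Lm Ro Rm phi \<and> M \<in> Ob CB \<and> N \<in> Ob CB \<and>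
       iso CB (left_eps CA CB Lo Ro phi M) \<and> iso CB (left_eps CA CB Lo Ro phi N) \<longrightarrow>
       (strongly_rickart CB M N \<longleftrightarrow>
          dual_strongly_rickart CA (Ro N) (Ro M) \<and>
          (\<forall>f\<in>hom CB M N. \<forall>k. is_kernel CB f k \<longrightarrow> cyclic CB M (Dom CB k))) \<and>
       (strongly_rickart CB M N \<longleftrightarrow>
          dual_strongly_rickart CA (Ro N) (Ro M) \<and>
          (\<forall>f\<in>hom CB M N. \<forall>k. is_kernel CB f k \<longrightarrow>
             iso CB (left_eps CA CB Lo Ro phi (Dom CB k))))) \<and>
    (\<forall>psi M N. right_adjoint_pair CA CB Lo Lm Ro Rm psi \<and> M \<in> Ob CA \<and> N \<in> Ob CA \<and>
       iso CA (right_eta CA CB Lo Ro psi M) \<and> iso CA (right_eta CA CB Lo Ro psi N) \<longrightarrow>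
       (dual_strongly_rickart CA M N \<longleftrightarrow>
          strongly_rickart CB (Lo N) (Lo M) \<and>
          (\<forall>f\<in>hom CA M N. \<forall>c. is_cokernel CA f c \<longrightarrow> cocyclic CA (Cod CA c) N)) \<and>
       (dual_strongly_rickart CA M N \<longleftrightarrow>
          strongly_rickart CB (Lo N) (Lo M) \<and>
          (\<forall>f\<in>hom CA M N. \<forall>c. is_cokernel CA f c \<longrightarrow>
             iso CA (right_eta CA CB Lo Ro psi (Cod CA c)))))"
  using left_adjoint_strongly_rickart_iff[OF assms] right_adjoint_dual_strongly_rickart_iff[OF assms]
  by (intro conjI allI impI; elim conjE) blast+

end
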